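(* Let $(X,d)$ be a compact metric space, $T:X\to X$ any map, and $I,J$ two computable interpretation functions on $X$ (not necessarily belonging to the same computable structure). Then $\mathcal E^I(x)=\mathcal E^J(x)$ for every $x\in X$.
   Context: $\Sigma=\{0,1\}^*$, $|s|$ the length of $s$; a universal Turing machine $\mathcal U$ is fixed and viewed as a partial recursive function $\Sigma\to\Sigma$. An interpretation function is $I:\Sigma\to X$ with dense image; it is computable if there is a total recursive $D:\Sigma\times\Sigma\times\mathbb N\to\mathbb Q$ with $|d(I(s_1),I(s_2))-D(s_1,s_2,n)|\le2^{-n}$; two computable interpretations are in the same computable structure if there is a total recursive $D^*$ with $|d(I_1(s_1),I_2(s_2))-D^*(s_1,s_2,n)|\le2^{-n}$. Fix a total recursive surjection $\mathcal Q:\Sigma\to\Sigma^*$ onto finite sequences of strings; $U(p)=I(\mathcal Q(\mathcal U(p)))\in X^*$ with $i$-th entry $U_i(p)$ (from $0$). $\mathcal E^I(x,n,\epsilon)=\min\{|p|: U(p)\in X^{n+1},\ \max_{0\le i\le n}d(U_i(p),T^i(x))<\epsilon\}$. Hyperreals: $\mathbb R^*$ an ordered field containing $\mathbb R$ with a surjective ring homomorphism $J:\mathbb R^{\mathbb N}\to\mathbb R^*$ such that if $a\in\mathbb R$ and $\exists k\ge1$ with $\phi_{kn}\ge a$ for all $n\ge1$ then $J(\phi)\ge a$; for nonzero $a,b$, $a\simeq b$ iff $a/b,b/a$ bounded; $[a]$ the class; $[a]\le[b]$ iff for all $x\in[a],y\in[b]$, $x\simeq y$ or $x<y$. $\mathcal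 R$ is the totally ordered set of $\approx$-classes of monotone sequences in $\mathbb R^*/{\simeq}$ ($(a_i)<(b_j)$ iff $\exists M$ with $a_n<b_m$ for all $n,m>M$; $\approx$ iff neither $<$), containing $\mathbb R^*/{\simeq}$ as constant sequences, with sups/infs of monotone sequences. $\mathcal E^I(x,\epsilon)=[J((\mathcal E^I(x,n,\epsilon))_n)]$, $\mathcal E^I(x)=\sup_{\epsilon>0}\mathcal E^I(x,\epsilon)\in\mathcal R$. *)

theory Defs
  imports "HOL-Analysis.Analysis" "HOL-Library.Nat_Bijection"
begin

datatype recf = Zr | Sc | Proj nat | Comp recf "recf list" | Prim recf recf | Mn recf

inductive reval :: "recf \<Rightarrow> nat list \<Rightarrow> nat \<Rightarrow> bool" where
  zero: "reval Zr xs 0"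
| succ: "reval Sc (x # xs) (Suc x)"
| proj: "i < length xs \<Longrightarrow> reval (Proj i) xs (xs ! i)"
| comp: "length ys = length gs \<Longrightarrow> (\<forall>i<length gs. reval (gs ! i) xs (ys ! i))
          \<Longrightarrow> reval f ys z \<Longrightarrow> reval (Comp f gs) xs z"
| prim0: "reval f xs y \<Longrightarrow> reval (Prim f g) (0 # xs) y"
| primS: "reval (Prim f g) (n # xs) y \<Longrightarrow> reval g (y # n # xs) z
          \<Longrightarrow> reval (Prim f g) (Suc n # xs) z"
| mn: "reval f (n # xs) 0 \<Longrightarrow> (\<forall>m<n. \<exists>y. reval f (m # xs) (Suc y))
          \<Longrightarrow> reval (Mn f) xs n"

text \<open>Bijective encoding of binary strings (Sigma = bool list) into nat.\<close>
fun bl_enc :: "bool list \<Rightarrow> nat" where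
  "bl_enc [] = 0"
| "bl_enc (b # s) = 2 * bl_enc s + (if b then 2 else 1)"

definition rat_enc :: "rat \<Rightarrow> nat" where
  "rat_enc q = prod_encode (int_encode (fst (quotient_of q)), nat (snd (quotient_of q)))"

definition partrec_bl :: "(bool list \<Rightarrow> bool list option) \<Rightarrow> bool" where
  "partrec_bl f \<longleftrightarrow> (\<exists>c. \<forall>s y. reval c [bl_enc s] y \<longleftrightarrow> map_option bl_enc (f s) = Some y)"

definition universal_machine :: "(bool list \<Rightarrow> bool list option) \<Rightarrow> bool" where
  "universal_machine U \<longleftrightarrow> partrec_bl U \<and>
     (\<forall>\<phi>. partrec_bl \<phi> \<longrightarrow> (\<exists>c. \<forall>p. U (c @ p) = \<phi> p))"

definition seq_decoder :: "(bool list \<Rightarrow> bool list list) \<Rightarrow> bool" where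
  "seq_decoder Q \<longleftrightarrow> surj Q \<and>
     (\<exists>c. \<forall>s y. reval c [bl_enc s] y \<longleftrightarrow> y = list_encode (map bl_enc (Q s)))"

definition total_rec_D :: "(bool list \<Rightarrow> bool list \<Rightarrow> nat \<Rightarrow> rat) \<Rightarrow> bool" where
  "total_rec_D D \<longleftrightarrow> (\<exists>c. \<forall>s1 s2 n y.
      reval c [bl_enc s1, bl_enc s2, n] y \<longleftrightarrow> y = rat_enc (D s1 s2 n))"

definition interpretation_fun :: "(bool list \<Rightarrow> 'a::metric_space) \<Rightarrow> bool" where
  "interpretation_fun I \<longleftrightarrow> closure (range I) = UNIV"

definition computable_interp :: "(bool list \<Rightarrow> 'a::metric_space) \<Rightarrow> bool" where
  "computable_interp I \<longleftrightarrow> interpretation_fun I \<and>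
     (\<exists>D. total_rec_D D \<and>
        (\<forall>s1 s2 n. \<bar>dist (I s1) (I s2) - real_of_rat (D s1 s2 n)\<bar> \<le> (1/2) ^ n))"

definition orbit_compl ::
  "(bool list \<Rightarrow> bool list option) \<Rightarrow> (bool list \<Rightarrow> bool list list) \<Rightarrow> ('a::metric_space \<Rightarrow> 'a)
    \<Rightarrow> (bool list \<Rightarrow> 'a) \<Rightarrow> 'a \<Rightarrow> nat \<Rightarrow> real \<Rightarrow> nat" where
  "orbit_compl U Q T I x n \<epsilon> = Inf {length p | p. \<exists>s. U p = Some s \<and> length (Q s) = Suc n \<and>
      (\<forall>i\<le>n. dist (I (Q s ! i)) ((T ^^ i) x) < \<epsilon>)}"

definition hyper_structure :: "(real \<Rightarrow> 'h::linordered_field) \<Rightarrow> ((nat \<Rightarrow> real) \<Rightarrow> 'h) \<Rightarrow> bool" where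
  "hyper_structure emb hJ \<longleftrightarrow>
     (\<forall>a b. emb (a + b) = emb a + emb b) \<and> (\<forall>a b. emb (a * b) = emb a * emb b) \<and> emb 1 = 1 \<and>
     (\<forall>a b. emb a \<le> emb b \<longleftrightarrow> a \<le> b) \<and>
     (\<forall>f g. hJ (\<lambda>n. f n + g n) = hJ f + hJ g) \<and> (\<forall>f g. hJ (\<lambda>n. f n * g n) = hJ f * hJ g) \<and>
     hJ (\<lambda>n. 1) = 1 \<and> surj hJ \<and>
     (\<forall>a \<phi>. (\<exists>k\<ge>1. \<forall>n\<ge>1. a \<le> \<phi> (k * n)) \<longrightarrow> emb a \<le> hJ \<phi>)"

definition hsim :: "(real \<Rightarrow> 'h::linordered_field) \<Rightarrow> 'h \<Rightarrow> 'h \<Rightarrow> bool" where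
  "hsim emb a b \<longleftrightarrow> a \<noteq> 0 \<and> b \<noteq> 0 \<and> 0 < a / b \<and> (\<exists>r. a / b \<le> emb r) \<and> (\<exists>r. b / a \<le> emb r)"

definition hclass :: "(real \<Rightarrow> 'h::linordered_field) \<Rightarrow> 'h \<Rightarrow> 'h set" where
  "hclass emb a = {b. hsim emb a b}"

definition hclasses :: "(real \<Rightarrow> 'h::linordered_field) \<Rightarrow> 'h set set" where
  "hclasses emb = {hclass emb a | a. a \<noteq> 0}"

definition cls_le :: "(real \<Rightarrow> 'h::linordered_field) \<Rightarrow> 'h set \<Rightarrow> 'h set \<Rightarrow> bool" where
  "cls_le emb A B \<longleftrightarrow> (\<forall>x\<in>A. \<forall>y\<in>B. hsim emb x y \<or> x < y)"

definition cls_less :: "(real \<Rightarrow> 'h::linordered_field) \<Rightarrow> 'h set \<Rightarrow> 'h set \<Rightarrow> bool" where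
  "cls_less emb A B \<longleftrightarrow> cls_le emb A B \<and> A \<noteq> B"

definition mono_cls_seq :: "(real \<Rightarrow> 'h::linordered_field) \<Rightarrow> (nat \<Rightarrow> 'h set) \<Rightarrow> bool" where
  "mono_cls_seq emb A \<longleftrightarrow> (\<forall>n. A n \<in> hclasses emb) \<and>
     ((\<forall>n m. n \<le> m \<longrightarrow> cls_le emb (A n) (A m)) \<or> (\<forall>n m. n \<le> m \<longrightarrow> cls_le emb (A m) (A n)))"

definition seq_less :: "(real \<Rightarrow> 'h::linordered_field) \<Rightarrow> (nat \<Rightarrow> 'h set) \<Rightarrow> (nat \<Rightarrow> 'h set) \<Rightarrow> bool" where
  "seq_less emb A B \<longleftrightarrow> (\<exists>M. \<forall>n m. M < n \<longrightarrow> M < m \<longrightarrow> cls_less emb (A n) (B m))"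

definition seq_approx :: "(real \<Rightarrow> 'h::linordered_field) \<Rightarrow> (nat \<Rightarrow> 'h set) \<Rightarrow> (nat \<Rightarrow> 'h set) \<Rightarrow> bool" where
  "seq_approx emb A B \<longleftrightarrow> \<not> seq_less emb A B \<and> \<not> seq_less emb B A"

text \<open>Element of R: the \<approx>-class of a monotone sequence of classes.\<close>
definition Rclass :: "(real \<Rightarrow> 'h::linordered_field) \<Rightarrow> (nat \<Rightarrow> 'h set) \<Rightarrow> (nat \<Rightarrow> 'h set) set" where
  "Rclass emb A = {B. mono_cls_seq emb B \<and> seq_approx emb A B}"

definition E_eps :: "(real \<Rightarrow> 'h::linordered_field) \<Rightarrow> ((nat \<Rightarrow> real) \<Rightarrow> 'h)
    \<Rightarrow> (bool list \<Rightarrow> bool list option) \<Rightarrow> (bool list \<Rightarrow> bool list list) \<Rightarrow> ('a::metric_space \<Rightarrow> 'a)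
    \<Rightarrow> (bool list \<Rightarrow> 'a) \<Rightarrow> 'a \<Rightarrow> real \<Rightarrow> 'h set" where
  "E_eps emb hJ U Q T I x \<epsilon> = hclass emb (hJ (\<lambda>n. real (orbit_compl U Q T I x n \<epsilon>)))"

text \<open>E^I(x) = sup_{eps>0} E^I(x,eps): the sup in R of the monotone (nondecreasing as
  eps decreases) family, realised as the \<approx>-class of the sequence eps = 1/(m+1).\<close>
definition E_orbit :: "(real \<Rightarrow> 'h::linordered_field) \<Rightarrow> ((nat \<Rightarrow> real) \<Rightarrow> 'h)
    \<Rightarrow> (bool list \<Rightarrow> bool list option) \<Rightarrow> (bool list \<Rightarrow> bool list list) \<Rightarrow> ('a::metric_space \<Rightarrow> 'a)
    \<Rightarrow> (bool list \<Rightarrow> 'a) \<Rightarrow> 'a \<Rightarrow> (nat \<Rightarrow> 'h set) set" where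
  "E_orbit emb hJ U Q T I x = Rclass emb (\<lambda>m. E_eps emb hJ U Q T I x (1 / real (Suc m)))"

end

(*
  By compactness, finitely many points I(s_1), ..., I(s_k) form a net of X, and each of them lies
  close to some J(t_j). Distances between I-points are computable to any precision, so a program
  can send every I-string u to the J-string t_j of a net point that it certifies to be near I(u).
  Prefixing this translator to a program that eps-shadows an orbit segment with I-points gives
  one that (eps + eta)-shadows it with J-points, whence E^J(x,n,eps+eta) <= E^I(x,n,eps) + c.
  An additive constant and the passage from eps to eps + eta do not change the order of
  magnitude of the supremum over eps, and the roles of I and J are symmetric.
*)

theory Submission
  imports Defs
begin

section \<open>Total recursive functions\<close>

inductive_cases reval_ZrE: "reval Zr xs y"
inductive_cases reval_ScE: "reval Sc xs y"
inductive_cases reval_ProjE: "reval (Proj i) xs y"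
inductive_cases reval_CompE: "reval (Comp f gs) xs y"
inductive_cases reval_PrimE: "reval (Prim f g) xs y"
inductive_cases reval_MnE: "reval (Mn f) xs y"

definition computes :: "recf \<Rightarrow> nat \<Rightarrow> (nat list \<Rightarrow> nat) \<Rightarrow> bool" where
  "computes c k F \<longleftrightarrow> (\<forall>xs y. length xs = k \<longrightarrow> (reval c xs y \<longleftrightarrow> y = F xs))"

definition total_recursive :: "nat \<Rightarrow> (nat list \<Rightarrow> nat) \<Rightarrow> bool" where
  "total_recursive k F \<longleftrightarrow> (\<exists>c. computes c k F)"

lemma total_recursive_cong:
  "total_recursive k F \<Longrightarrow> (\<And>xs. length xs = k \<Longrightarrow> F xs = G xs) \<Longrightarrow> total_recursive k G"
  unfolding total_recursive_def computes_def by metis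

lemma total_recursive_zero: "total_recursive k (\<lambda>_. 0)"
  unfolding total_recursive_def computes_def
  by (rule exI[of _ Zr]) (auto intro: reval.zero elim: reval_ZrE)

lemma total_recursive_proj: "i < k \<Longrightarrow> total_recursive k (\<lambda>xs. xs ! i)"
  unfolding total_recursive_def computes_def
  by (rule exI[of _ "Proj i"]) (auto intro: reval.proj elim: reval_ProjE)

lemma total_recursive_Suc_proj: "total_recursive 1 (\<lambda>xs. Suc (xs ! 0))"
  unfolding total_recursive_def computes_def
proof (rule exI[of _ Sc], intro allI impI)
  fix xs :: "nat list" and y
  assume "length xs = 1"
  then obtain a where "xs = [a]"
    by (cases xs) auto
  then show "reval Sc xs y = (y = Suc (xs ! 0))"
    by (auto intro: reval.succ elim: reval_ScE)
qed

lemma computes_Comp: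
  assumes f: "computes f (length Fs) G"
    and gs: "list_all2 (\<lambda>g F. computes g k F) gs Fs"
  shows "computes (Comp f gs) k (\<lambda>xs. G (map (\<lambda>F. F xs) Fs))"
  unfolding computes_def
proof (intro allI impI)
  fix xs :: "nat list" and y
  assume "length xs = k"
  then have "length ys = length gs \<and> (\<forall>i<length gs. reval (gs ! i) xs (ys ! i))
      \<longleftrightarrow> ys = map (\<lambda>F. F xs) Fs" for ys
    using gs unfolding computes_def list_all2_conv_all_nth by (auto intro: nth_equalityI)
  then have "reval (Comp f gs) xs y \<longleftrightarrow> reval f (map (\<lambda>F. F xs) Fs) y"
    by (metis (no_types, lifting) reval.comp reval_CompE)
  then show "reval (Comp f gs) xs y \<longleftrightarrow> y = G (map (\<lambda>F. F xs) Fs)"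
    using f unfolding computes_def by simp
qed

lemma total_recursive_compose:
  assumes "total_recursive (length Fs) G" and "\<forall>F\<in>set Fs. total_recursive k F"
  shows "total_recursive k (\<lambda>xs. G (map (\<lambda>F. F xs) Fs))"
proof -
  obtain f where f: "computes f (length Fs) G"
    using assms(1) unfolding total_recursive_def by blast
  have "list_all2 (\<lambda>g F. computes g k F) (map (\<lambda>F. SOME g. computes g k F) Fs) Fs"
    using assms(2) unfolding total_recursive_def
    by (auto simp: list_all2_conv_all_nth intro: someI_ex)
  then show ?thesis
    using computes_Comp[OF f] unfolding total_recursive_def by blast
qed

lemma total_recursive_compose1:
  "total_recursive 1 G \<Longrightarrow> total_recursive k F \<Longrightarrow> total_recursive k (\<lambda>xs. G [F xs])"
  using total_recursive_compose[of "[F]"] by simp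

lemma total_recursive_compose2:
  "total_recursive 2 G \<Longrightarrow> total_recursive k F1 \<Longrightarrow> total_recursive k F2 \<Longrightarrow>
    total_recursive k (\<lambda>xs. G [F1 xs, F2 xs])"
  using total_recursive_compose[of "[F1, F2]"] by (simp add: numeral_2_eq_2)

lemma total_recursive_compose3:
  "total_recursive 3 G \<Longrightarrow> total_recursive k F1 \<Longrightarrow> total_recursive k F2 \<Longrightarrow>
    total_recursive k F3 \<Longrightarrow> total_recursive k (\<lambda>xs. G [F1 xs, F2 xs, F3 xs])"
  using total_recursive_compose[of "[F1, F2, F3]"] by (simp add: numeral_3_eq_3)

lemma computes_Prim:
  assumes f: "computes f k F" and g: "computes g (Suc (Suc k)) G"
  shows "computes (Prim f g) (Suc k) (\<lambda>xs. rec_nat (F (tl xs)) (\<lambda>n y. G (y # n # tl xs)) (hd xs))"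
  unfolding computes_def
proof (intro allI impI)
  fix xs :: "nat list" and y
  assume "length xs = Suc k"
  then obtain n ys where xs: "xs = n # ys" and ys: "length ys = k"
    by (cases xs) auto
  have "reval (Prim f g) (n # ys) y \<longleftrightarrow> y = rec_nat (F ys) (\<lambda>n y. G (y # n # ys)) n" for y
  proof (induction n arbitrary: y)
    case 0
    show ?case
      using f ys unfolding computes_def by (auto intro: reval.prim0 elim: reval_PrimE)
  next
    case (Suc n)
    show ?case
      using Suc.IH g ys unfolding computes_def
      by (auto intro: reval.primS elim: reval_PrimE[of _ _ "Suc n # ys"])
  qed
  then show "reval (Prim f g) xs y \<longleftrightarrow> y = rec_nat (F (tl xs)) (\<lambda>n y. G (y # n # tl xs)) (hd xs)"
    unfolding xs by simp
qed

lemma total_recursive_primrec: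
  assumes "total_recursive k F" and "total_recursive (Suc (Suc k)) G"
    and "\<And>n xs. length xs = k \<Longrightarrow> H (n # xs) = rec_nat (F xs) (\<lambda>m y. G (y # m # xs)) n"
  shows "total_recursive (Suc k) H"
proof -
  have base: "total_recursive (Suc k) (\<lambda>xs. rec_nat (F (tl xs)) (\<lambda>n y. G (y # n # tl xs)) (hd xs))"
    using assms(1,2) computes_Prim unfolding total_recursive_def by blast
  then show ?thesis
    by (rule total_recursive_cong) (auto simp: assms(3) length_Suc_conv)
qed

lemma computes_Mn:
  assumes f: "computes f (Suc k) F" and ex: "\<And>xs. length xs = k \<Longrightarrow> \<exists>n. F (n # xs) = 0"
  shows "computes (Mn f) k (\<lambda>xs. LEAST n. F (n # xs) = 0)"
  unfolding computes_def
proof (intro allI impI)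
  fix xs :: "nat list" and y
  assume xs: "length xs = k"
  have f_xs: "reval f (n # xs) z \<longleftrightarrow> z = F (n # xs)" for n z
    using f xs unfolding computes_def by simp
  have "reval (Mn f) xs y \<longleftrightarrow> F (y # xs) = 0 \<and> (\<forall>m<y. F (m # xs) \<noteq> 0)"
  proof
    assume "reval (Mn f) xs y"
    then show "F (y # xs) = 0 \<and> (\<forall>m<y. F (m # xs) \<noteq> 0)"
      by (auto elim!: reval_MnE simp: f_xs)
  next
    assume y: "F (y # xs) = 0 \<and> (\<forall>m<y. F (m # xs) \<noteq> 0)"
    have "\<exists>z. reval f (m # xs) (Suc z)" if "m < y" for m
      using y that not0_implies_Suc by (metis f_xs)
    with y show "reval (Mn f) xs y"
      by (simp add: reval.mn f_xs)
  qed
  also have "\<dots> \<longleftrightarrow> y = (LEAST n. F (n # xs) = 0)"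
  proof
    assume "F (y # xs) = 0 \<and> (\<forall>m<y. F (m # xs) \<noteq> 0)"
    then show "y = (LEAST n. F (n # xs) = 0)"
      by (intro Least_equality[symmetric]) (auto simp: not_less[symmetric])
  next
    assume "y = (LEAST n. F (n # xs) = 0)"
    then show "F (y # xs) = 0 \<and> (\<forall>m<y. F (m # xs) \<noteq> 0)"
      using ex[OF xs] by (auto intro: LeastI_ex dest: not_less_Least)
  qed
  finally show "reval (Mn f) xs y \<longleftrightarrow> y = (LEAST n. F (n # xs) = 0)" .
qed

lemma total_recursive_Suc: "total_recursive k F \<Longrightarrow> total_recursive k (\<lambda>xs. Suc (F xs))"
  using total_recursive_compose1[OF total_recursive_Suc_proj] by simp

lemma total_recursive_const: "total_recursive k (\<lambda>_. n)"
  by (induction n) (auto intro: total_recursive_zero total_recursive_Suc)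

lemma total_recursive_add:
  assumes "total_recursive k F" and "total_recursive k G"
  shows "total_recursive k (\<lambda>xs. F xs + G xs)"
proof -
  have closed_form: "rec_nat b (\<lambda>_. Suc) n = n + b" for n b :: nat
    by (induction n) auto
  have base: "total_recursive 2 (\<lambda>xs. xs ! 0 + xs ! 1)"
    using total_recursive_primrec[where k = 1 and F = "\<lambda>xs. xs ! 0" and G = "\<lambda>xs. Suc (xs ! 0)" and
        H = "\<lambda>xs. xs ! 0 + xs ! 1"]
    by (simp add: numeral_2_eq_2 closed_form total_recursive_proj total_recursive_Suc)
  show ?thesis
    using total_recursive_compose2[OF base assms] by simp
qed

lemma total_recursive_mult:
  assumes "total_recursive k F" and "total_recursive k G"
  shows "total_recursive k (\<lambda>xs. F xs * G xs)"
proof -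
  have closed_form: "rec_nat 0 (\<lambda>_ y. y + b) n = n * b" for n b :: nat
    by (induction n) auto
  have base: "total_recursive 2 (\<lambda>xs. xs ! 0 * xs ! 1)"
    using total_recursive_primrec[where k = 1 and F = "\<lambda>_. 0" and G = "\<lambda>xs. xs ! 0 + xs ! 2" and
        H = "\<lambda>xs. xs ! 0 * xs ! 1"]
    by (simp add: numeral_2_eq_2 closed_form total_recursive_proj total_recursive_add
        total_recursive_zero)
  show ?thesis
    using total_recursive_compose2[OF base assms] by simp
qed

lemma total_recursive_pred:
  assumes "total_recursive k F"
  shows "total_recursive k (\<lambda>xs. F xs - 1)"
proof -
  have closed_form: "rec_nat 0 (\<lambda>m _. m) n = n - 1" for n :: nat
    by (cases n) auto
  have base: "total_recursive 1 (\<lambda>xs. xs ! 0 - Suc 0)"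
    using total_recursive_primrec[where k = 0 and F = "\<lambda>_. 0" and G = "\<lambda>xs. xs ! 1" and
        H = "\<lambda>xs. xs ! 0 - Suc 0"]
    by (simp add: closed_form total_recursive_proj total_recursive_zero)
  show ?thesis
    using total_recursive_compose1[OF base assms] by simp
qed

lemma total_recursive_diff:
  assumes "total_recursive k F" and "total_recursive k G"
  shows "total_recursive k (\<lambda>xs. F xs - G xs)"
proof -
  have closed_form: "rec_nat b (\<lambda>_ y. y - Suc 0) n = b - n" for n b :: nat
    by (induction n) auto
  have base: "total_recursive 2 (\<lambda>xs. xs ! 1 - xs ! 0)"
    using total_recursive_primrec[where k = 1 and F = "\<lambda>xs. xs ! 0" and G = "\<lambda>xs. xs ! 0 - 1" and
        H = "\<lambda>xs. xs ! 1 - xs ! 0"]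
    by (simp add: numeral_2_eq_2 closed_form total_recursive_proj
        total_recursive_pred[OF total_recursive_proj[of 0 "Suc (Suc (Suc 0))"], simplified])
  show ?thesis
    using total_recursive_compose2[OF base assms(2,1)] by simp
qed

lemma total_recursive_of_bool_odd:
  assumes "total_recursive k F"
  shows "total_recursive k (\<lambda>xs. of_bool (odd (F xs)))"
proof -
  have closed_form: "rec_nat (0::nat) (\<lambda>_ y. Suc 0 - y) n = of_bool (odd n)" for n :: nat
    by (induction n) auto
  have base: "total_recursive 1 (\<lambda>xs. of_bool (odd (xs ! 0)))"
    using total_recursive_primrec[where k = 0 and F = "\<lambda>_. 0" and G = "\<lambda>xs. Suc 0 - xs ! 0" and
        H = "\<lambda>xs. of_bool (odd (xs ! 0))"]
    by (simp add: closed_form total_recursive_proj total_recursive_diff total_recursive_const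
        total_recursive_zero)
  show ?thesis
    using total_recursive_compose1[OF base assms] by simp
qed

lemma total_recursive_triangle:
  assumes "total_recursive k F"
  shows "total_recursive k (\<lambda>xs. triangle (F xs))"
proof -
  have closed_form: "rec_nat 0 (\<lambda>m y. Suc (y + m)) n = triangle n" for n :: nat
    by (induction n) auto
  have base: "total_recursive 1 (\<lambda>xs. triangle (xs ! 0))"
    using total_recursive_primrec[where k = 0 and F = "\<lambda>_. 0"
        and G = "\<lambda>xs. Suc (xs ! 0 + xs ! 1)" and H = "\<lambda>xs. triangle (xs ! 0)"]
    by (simp add: closed_form total_recursive_proj total_recursive_add total_recursive_Suc
        total_recursive_zero)
  show ?thesis
    using total_recursive_compose1[OF base assms] by simp
qed

definition decidable :: "nat \<Rightarrow> (nat list \<Rightarrow> bool) \<Rightarrow> bool" where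
  "decidable k P \<longleftrightarrow> total_recursive k (\<lambda>xs. of_bool (P xs))"

lemma decidable_less:
  assumes "total_recursive k F" and "total_recursive k G"
  shows "decidable k (\<lambda>xs. F xs < G xs)"
proof -
  have "total_recursive k (\<lambda>xs. 1 - (1 - (G xs - F xs)))"
    by (intro total_recursive_diff total_recursive_const assms)
  then show ?thesis
    unfolding decidable_def by (rule total_recursive_cong) auto
qed

lemma decidable_eq:
  assumes "total_recursive k F" and "total_recursive k G"
  shows "decidable k (\<lambda>xs. F xs = G xs)"
proof -
  have "total_recursive k (\<lambda>xs. 1 - ((F xs - G xs) + (G xs - F xs)))"
    by (intro total_recursive_diff total_recursive_add total_recursive_const assms)
  then show ?thesis
    unfolding decidable_def by (rule total_recursive_cong) auto
qed

lemma decidable_not: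
  assumes "decidable k P"
  shows "decidable k (\<lambda>xs. \<not> P xs)"
proof -
  have "total_recursive k (\<lambda>xs. 1 - of_bool (P xs))"
    using assms unfolding decidable_def by (intro total_recursive_diff total_recursive_const)
  then show ?thesis
    unfolding decidable_def by (rule total_recursive_cong) simp
qed

lemma decidable_disj:
  assumes "decidable k P" and "decidable k R"
  shows "decidable k (\<lambda>xs. P xs \<or> R xs)"
proof -
  have "total_recursive k (\<lambda>xs. 1 - (1 - of_bool (P xs)) * (1 - of_bool (R xs)))"
    using assms unfolding decidable_def
    by (intro total_recursive_diff total_recursive_mult total_recursive_const)
  then show ?thesis
    unfolding decidable_def by (rule total_recursive_cong) auto
qed

lemma total_recursive_If:
  assumes "decidable k P" and "total_recursive k F" and "total_recursive k G"
  shows "total_recursive k (\<lambda>xs. if P xs then F xs else G xs)"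
proof -
  have "total_recursive k (\<lambda>xs. F xs * of_bool (P xs) + G xs * (1 - of_bool (P xs)))"
    using assms unfolding decidable_def
    by (intro total_recursive_add total_recursive_mult total_recursive_diff total_recursive_const)
  then show ?thesis
    by (rule total_recursive_cong) auto
qed

lemma total_recursive_Least:
  assumes "decidable (Suc k) P" and "\<And>xs. length xs = k \<Longrightarrow> \<exists>n. P (n # xs)"
  shows "total_recursive k (\<lambda>xs. LEAST n. P (n # xs))"
proof -
  obtain c where "computes c (Suc k) (\<lambda>xs. of_bool (\<not> P xs))"
    using decidable_not[OF assms(1)] unfolding decidable_def total_recursive_def by blast
  from computes_Mn[OF this] assms(2) show ?thesis
    unfolding total_recursive_def by auto
qed

section \<open>Recursive coding of pairs and lists\<close>

lemma total_recursive_prod_encode: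
  "total_recursive k F \<Longrightarrow> total_recursive k G \<Longrightarrow> total_recursive k (\<lambda>xs. prod_encode (F xs, G xs))"
  unfolding prod_encode_def by (simp add: total_recursive_add total_recursive_triangle)

lemma triangle_mono: "m \<le> n \<Longrightarrow> triangle m \<le> triangle n"
  by (induction n rule: dec_induct) auto

lemma Least_less_triangle_prod_encode: "(LEAST t. prod_encode (m, n) < triangle (Suc t)) = m + n"
proof (rule Least_equality)
  show "prod_encode (m, n) < triangle (Suc (m + n))"
    by (simp add: prod_encode_def)
next
  fix t
  assume "prod_encode (m, n) < triangle (Suc t)"
  then have "triangle (m + n) < triangle (Suc t)"
    by (simp add: prod_encode_def)
  then show "m + n \<le> t"
    using triangle_mono[of "Suc t" "m + n"] by linarith
qed

lemma prod_decode_via_Least_less_triangle: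
  "fst (prod_decode z) = z - triangle (LEAST t. z < triangle (Suc t))"
  "snd (prod_decode z) = (LEAST t. z < triangle (Suc t)) - fst (prod_decode z)"
proof -
  obtain m n where mn: "prod_decode z = (m, n)"
    by fastforce
  then have "z = prod_encode (m, n)"
    by (metis prod_decode_inverse)
  then show "fst (prod_decode z) = z - triangle (LEAST t. z < triangle (Suc t))"
    and "snd (prod_decode z) = (LEAST t. z < triangle (Suc t)) - fst (prod_decode z)"
    using mn by (simp_all add: Least_less_triangle_prod_encode del: triangle_Suc)
      (simp add: prod_encode_def)
qed

lemma total_recursive_Least_less_triangle:
  assumes "total_recursive k F"
  shows "total_recursive k (\<lambda>xs. LEAST t. F xs < triangle (Suc t))"
proof -
  have "decidable 2 (\<lambda>xs. xs ! 1 < triangle (Suc (xs ! 0)))"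
    by (intro decidable_less total_recursive_triangle total_recursive_Suc total_recursive_proj)
      simp_all
  moreover have "\<exists>t. z < triangle (Suc t)" for z
    by (rule exI[of _ z]) (induction z, simp_all)
  ultimately have "total_recursive 1 (\<lambda>xs. LEAST t. (t # xs) ! 1 < triangle (Suc ((t # xs) ! 0)))"
    by (intro total_recursive_Least) (simp_all add: numeral_2_eq_2)
  from total_recursive_compose1[OF this assms] show ?thesis
    by simp
qed

lemma total_recursive_fst_prod_decode:
  assumes "total_recursive k F"
  shows "total_recursive k (\<lambda>xs. fst (prod_decode (F xs)))"
  unfolding prod_decode_via_Least_less_triangle(1)
  by (intro total_recursive_diff total_recursive_triangle
      total_recursive_Least_less_triangle assms)

lemma total_recursive_snd_prod_decode:
  assumes "total_recursive k F"
  shows "total_recursive k (\<lambda>xs. snd (prod_decode (F xs)))"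
  unfolding prod_decode_via_Least_less_triangle(2)
  by (intro total_recursive_diff total_recursive_fst_prod_decode
      total_recursive_Least_less_triangle assms)

text \<open>A state \<open>prod_encode (l, acc)\<close> holds the code \<open>l\<close> of the part of a list still to be
  processed and the code \<open>acc\<close> of the reversed list of images produced so far.\<close>

definition rev_map_step :: "(nat \<Rightarrow> nat) \<Rightarrow> nat \<Rightarrow> nat" where
  "rev_map_step \<tau> st =
    (if fst (prod_decode st) = 0 then st
     else prod_encode (snd (prod_decode (fst (prod_decode st) - 1)),
       Suc (prod_encode (\<tau> (fst (prod_decode (fst (prod_decode st) - 1))), snd (prod_decode st)))))"

lemma rev_map_step_Cons:
  "rev_map_step \<tau> (prod_encode (list_encode (x # xs), list_encode acc)) =
    prod_encode (list_encode xs, list_encode (\<tau> x # acc))"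
  by (simp add: rev_map_step_def)

lemma funpow_rev_map_step:
  "(rev_map_step \<tau> ^^ n) (prod_encode (list_encode L, list_encode acc)) =
    prod_encode (list_encode (drop n L), list_encode (rev (take n (map \<tau> L)) @ acc))"
proof (induction n arbitrary: L acc)
  case 0
  then show ?case
    by simp
next
  case (Suc n)
  show ?case
  proof (cases L)
    case Nil
    have "(rev_map_step \<tau> ^^ m) (prod_encode (0, a)) = prod_encode (0, a)" for m a
      by (induction m) (simp_all add: rev_map_step_def)
    from this[of "Suc n"] show ?thesis
      using Nil by simp
  next
    case (Cons x xs)
    then show ?thesis
      using Suc.IH[of xs "\<tau> x # acc"]
      by (simp only: funpow_Suc_right o_apply rev_map_step_Cons) simp
  qed
qed

lemma length_le_list_encode: "length L \<le> list_encode L"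
  by (induction L) (auto intro: le_trans[OF _ le_prod_encode_2])

lemma rev_map_by_iteration:
  "snd (prod_decode ((rev_map_step \<tau> ^^ z) (prod_encode (z, 0)))) =
    list_encode (rev (map \<tau> (list_decode z)))"
  using funpow_rev_map_step[where n = z and L = "list_decode z" and acc = "[]"]
    length_le_list_encode[of "list_decode z"]
  by simp

lemma total_recursive_rev_map_step:
  assumes "total_recursive 1 (\<lambda>xs. \<tau> (xs ! 0))" and "total_recursive k F"
  shows "total_recursive k (\<lambda>xs. rev_map_step \<tau> (F xs))"
proof -
  have \<tau>: "total_recursive k (\<lambda>xs. \<tau> (G xs))" if "total_recursive k G" for G
    using total_recursive_compose1[OF assms(1) that] by simp
  show ?thesis
    unfolding rev_map_step_def
    by (intro total_recursive_If decidable_eq total_recursive_prod_encode total_recursive_Suc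
        total_recursive_fst_prod_decode total_recursive_snd_prod_decode total_recursive_pred
        total_recursive_const \<tau> assms(2))
qed

lemma total_recursive_list_map:
  assumes "total_recursive 1 (\<lambda>xs. \<tau> (xs ! 0))" and "total_recursive k F"
  shows "total_recursive k (\<lambda>xs. list_encode (map \<tau> (list_decode (F xs))))"
proof -
  have rev_map: "total_recursive k (\<lambda>xs. list_encode (rev (map \<sigma> (list_decode (G xs)))))"
    if \<sigma>: "total_recursive 1 (\<lambda>xs. \<sigma> (xs ! 0))" and G: "total_recursive k G" for \<sigma> G
  proof -
    have funpow: "rec_nat a (\<lambda>_. f) n = (f ^^ n) a" for a n and f :: "nat \<Rightarrow> nat"
      by (induction n) auto
    have "total_recursive 2 (\<lambda>xs. (rev_map_step \<sigma> ^^ (xs ! 0)) (prod_encode (xs ! 1, 0)))"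
      using total_recursive_primrec[where k = 1 and F = "\<lambda>xs. prod_encode (xs ! 0, 0)"
          and G = "\<lambda>xs. rev_map_step \<sigma> (xs ! 0)"
          and H = "\<lambda>xs. (rev_map_step \<sigma> ^^ (xs ! 0)) (prod_encode (xs ! 1, 0))"]
      by (simp add: funpow numeral_2_eq_2 total_recursive_prod_encode total_recursive_proj
          total_recursive_const total_recursive_rev_map_step[OF \<sigma>])
    from total_recursive_snd_prod_decode[OF total_recursive_compose2[OF this G G]] show ?thesis
      by (simp add: rev_map_by_iteration)
  qed
  \<comment> \<open>a second pass with the identity undoes the reversal\<close>
  have "total_recursive 1 (\<lambda>xs. id (xs ! 0))"
    by (simp add: total_recursive_proj)
  from rev_map[OF this rev_map[OF assms]] show ?thesis
    by (simp add: rev_map)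
qed

section \<open>Strings and universal machines\<close>

lemma inj_bl_enc: "inj bl_enc"
proof (rule injI)
  show "bl_enc s = bl_enc t \<Longrightarrow> s = t" for s t
  proof (induction s arbitrary: t)
    case Nil
    then show ?case
      by (cases t) (auto split: if_splits)
  next
    case (Cons b s)
    then obtain a l where t: "t = a # l"
      by (cases t) (auto split: if_splits)
    with Cons.prems have "b = a \<and> bl_enc s = bl_enc l"
      by (auto split: if_splits; presburger)
    with Cons.IH t show ?case
      by blast
  qed
qed

lemma surj_bl_enc: "surj bl_enc"
proof -
  have "\<exists>s. bl_enc s = n" for n
  proof (induction n rule: less_induct)
    case (less n)
    have "n = 0 \<or> (\<exists>m. n = 2 * m + 1) \<or> (\<exists>m. n = 2 * m + 2)"
      by presburger
    then consider "n = 0" | m where "n = 2 * m + 1" | m where "n = 2 * m + 2"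
      by blast
    then show ?case
    proof cases
      case 1
      then show ?thesis
        by (intro exI[of _ "[]"]) simp
    next
      case (2 m)
      with less obtain s where "bl_enc s = m"
        by fastforce
      with 2 show ?thesis
        by (intro exI[of _ "False # s"]) simp
    next
      case (3 m)
      with less obtain s where "bl_enc s = m"
        by fastforce
      with 3 show ?thesis
        by (intro exI[of _ "True # s"]) simp
    qed
  qed
  then show ?thesis
    by (metis surjI)
qed

definition bl_dec :: "nat \<Rightarrow> bool list" where
  "bl_dec = inv bl_enc"

lemma bl_enc_dec [simp]: "bl_enc (bl_dec n) = n"
  unfolding bl_dec_def by (rule surj_f_inv_f[OF surj_bl_enc])

lemma bl_dec_enc [simp]: "bl_dec (bl_enc s) = s"
  unfolding bl_dec_def by (rule inv_f_f[OF inj_bl_enc])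

definition computable_string_fun :: "(bool list \<Rightarrow> bool list) \<Rightarrow> bool" where
  "computable_string_fun \<sigma> \<longleftrightarrow> total_recursive 1 (\<lambda>xs. bl_enc (\<sigma> (bl_dec (xs ! 0))))"

lemma total_recursive_seq_decoder:
  assumes "seq_decoder Q"
  shows "total_recursive 1 (\<lambda>xs. list_encode (map bl_enc (Q (bl_dec (xs ! 0)))))"
proof -
  obtain c where c: "\<And>s y. reval c [bl_enc s] y \<longleftrightarrow> y = list_encode (map bl_enc (Q s))"
    using assms unfolding seq_decoder_def by blast
  have "computes c 1 (\<lambda>xs. list_encode (map bl_enc (Q (bl_dec (xs ! 0)))))"
    unfolding computes_def
  proof (intro allI impI)
    fix xs :: "nat list" and y
    assume "length xs = 1"
    then obtain a where "xs = [a]"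
      by (cases xs) auto
    then show "reval c xs y \<longleftrightarrow> y = list_encode (map bl_enc (Q (bl_dec (xs ! 0))))"
      using c[of "bl_dec a" y] by simp
  qed
  then show ?thesis
    unfolding total_recursive_def by blast
qed

lemma total_recursive_total_rec_D:
  assumes "total_rec_D D"
  shows "total_recursive 3 (\<lambda>xs. rat_enc (D (bl_dec (xs ! 0)) (bl_dec (xs ! 1)) (xs ! 2)))"
proof -
  obtain c where c: "\<And>s1 s2 n y. reval c [bl_enc s1, bl_enc s2, n] y \<longleftrightarrow> y = rat_enc (D s1 s2 n)"
    using assms unfolding total_rec_D_def by blast
  have "computes c 3 (\<lambda>xs. rat_enc (D (bl_dec (xs ! 0)) (bl_dec (xs ! 1)) (xs ! 2)))"
    unfolding computes_def
  proof (intro allI impI)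
    fix xs :: "nat list" and y
    assume "length xs = 3"
    then obtain a b n where "xs = [a, b, n]"
      by (auto simp: numeral_3_eq_3 length_Suc_conv)
    then show "reval c xs y \<longleftrightarrow> y = rat_enc (D (bl_dec (xs ! 0)) (bl_dec (xs ! 1)) (xs ! 2))"
      using c[of "bl_dec a" "bl_dec b" n y] by simp
  qed
  then show ?thesis
    unfolding total_recursive_def by blast
qed

lemma partrec_bl_map_option:
  assumes f: "partrec_bl f" and h: "computable_string_fun h"
  shows "partrec_bl (\<lambda>p. map_option h (f p))"
proof -
  obtain cf where cf: "\<And>s y. reval cf [bl_enc s] y \<longleftrightarrow> map_option bl_enc (f s) = Some y"
    using f unfolding partrec_bl_def by blast
  obtain ch where ch: "computes ch 1 (\<lambda>xs. bl_enc (h (bl_dec (xs ! 0))))"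
    using h unfolding computable_string_fun_def total_recursive_def by blast
  have "reval (Comp ch [cf]) [bl_enc s] y \<longleftrightarrow> map_option bl_enc (map_option h (f s)) = Some y" for s y
  proof -
    have "reval (Comp ch [cf]) [bl_enc s] y \<longleftrightarrow> (\<exists>z. reval cf [bl_enc s] z \<and> reval ch [z] y)"
      by (auto intro!: reval.comp elim!: reval_CompE simp: length_Suc_conv) blast
    also have "\<dots> \<longleftrightarrow> map_option bl_enc (map_option h (f s)) = Some y"
      using ch unfolding cf computes_def by (cases "f s") auto
    finally show ?thesis .
  qed
  then show ?thesis
    unfolding partrec_bl_def by blast
qed

lemma universal_machine_outputs_all:
  assumes "universal_machine U"
  shows "\<exists>p. U p = Some s"
proof -
  obtain c where "computes c 1 (\<lambda>_. bl_enc s)"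
    using total_recursive_const unfolding total_recursive_def by blast
  then have "partrec_bl (\<lambda>_. Some s)"
    unfolding partrec_bl_def computes_def by (intro exI[of _ c]) auto
  then obtain p where "\<forall>q. U (p @ q) = Some s"
    using assms unfolding universal_machine_def by blast
  then show ?thesis
    by (metis append_Nil2)
qed

lemma seq_decoder_lift_map:
  assumes Q: "seq_decoder Q" and \<sigma>: "computable_string_fun \<sigma>"
  obtains h where "computable_string_fun h" and "\<And>s. Q (h s) = map \<sigma> (Q s)"
proof -
  define code_Q where "code_Q z = list_encode (map bl_enc (Q (bl_dec z)))" for z
  define \<tau> where "\<tau> z = bl_enc (\<sigma> (bl_dec z))" for z
  define P where "P xs \<longleftrightarrow> code_Q (xs ! 0) = list_encode (map \<tau> (list_decode (code_Q (xs ! 1))))"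
    for xs
  have P_iff: "P [bl_enc s', z] \<longleftrightarrow> Q s' = map \<sigma> (Q (bl_dec z))" for s' z
  proof -
    have "P [bl_enc s', z] \<longleftrightarrow> map bl_enc (Q s') = map bl_enc (map \<sigma> (Q (bl_dec z)))"
      unfolding P_def code_Q_def \<tau>_def by (simp add: list_encode_eq comp_def)
    then show ?thesis
      by (simp only: inj_map_eq_map[OF inj_bl_enc])
  qed
  have code_Q: "total_recursive k (\<lambda>xs. code_Q (xs ! i))" if "i < k" for i k
    using total_recursive_compose1[OF total_recursive_seq_decoder[OF Q]
        total_recursive_proj[OF that]]
    unfolding code_Q_def by simp
  have "decidable 2 P"
    unfolding P_def using \<sigma> unfolding computable_string_fun_def \<tau>_def[symmetric]
    by (intro decidable_eq total_recursive_list_map code_Q) simp_all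
  moreover have ex: "\<exists>n. P [n, z]" for z
  proof -
    obtain s' where "Q s' = map \<sigma> (Q (bl_dec z))"
      using Q unfolding seq_decoder_def by (metis surjD)
    then show ?thesis
      using P_iff by blast
  qed
  ultimately have "total_recursive 1 (\<lambda>xs. LEAST n. P (n # xs))"
    by (intro total_recursive_Least) (auto simp: numeral_2_eq_2 length_Suc_conv)
  then have "computable_string_fun (\<lambda>s. bl_dec (LEAST n. P [n, bl_enc s]))"
    unfolding computable_string_fun_def by (rule total_recursive_cong) (auto simp: length_Suc_conv)
  moreover have "Q (bl_dec (LEAST n. P [n, bl_enc s])) = map \<sigma> (Q s)" for s
    using P_iff[of "bl_dec (LEAST n. P [n, bl_enc s])" "bl_enc s"] LeastI_ex[OF ex] by simp
  ultimately show ?thesis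
    using that by blast
qed

lemma universal_machine_map_translator:
  assumes "universal_machine U" and "seq_decoder Q" and "computable_string_fun \<sigma>"
  obtains c where "\<And>p s. U p = Some s \<Longrightarrow> \<exists>s'. U (c @ p) = Some s' \<and> Q s' = map \<sigma> (Q s)"
proof -
  obtain h where h: "computable_string_fun h" and Qh: "\<And>s. Q (h s) = map \<sigma> (Q s)"
    using seq_decoder_lift_map[OF assms(2,3)] by blast
  obtain c where c: "\<And>p. U (c @ p) = map_option h (U p)"
    using assms(1) partrec_bl_map_option[OF _ h] unfolding universal_machine_def by blast
  show ?thesis
  proof (rule that)
    show "\<exists>s'. U (c @ p) = Some s' \<and> Q s' = map \<sigma> (Q s)" if "U p = Some s" for p s
      using c[of p] Qh[of s] that by simp
  qed
qed

section \<open>Approximating one interpretation by another\<close>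

text \<open>For \<open>q = p / d\<close> in lowest terms, \<open>rat_enc q = prod_encode (int_encode p, d)\<close>, where
  \<open>int_encode p\<close> is odd if \<open>p < 0\<close> and is \<open>2 * p\<close> otherwise.\<close>

definition rat_code_less :: "nat \<Rightarrow> nat \<Rightarrow> nat \<Rightarrow> bool" where
  "rat_code_less a b r \<longleftrightarrow>
    odd (fst (prod_decode r)) \<or> fst (prod_decode r) * b < 2 * a * snd (prod_decode r)"

lemma rat_code_less_rat_enc:
  assumes "0 < b"
  shows "rat_code_less a b (rat_enc q) \<longleftrightarrow> q < of_nat a / of_nat b"
proof -
  obtain p d where pd: "quotient_of q = (p, d)"
    by fastforce
  have d: "0 < d" and q: "q = of_int p / of_int d"
    using quotient_of_denom_pos[OF pd] quotient_of_div[OF pd] by simp_all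
  have enc: "rat_enc q = prod_encode (int_encode p, nat d)"
    unfolding rat_enc_def pd by simp
  show ?thesis
  proof (cases "0 \<le> p")
    case True
    then have "rat_code_less a b (rat_enc q) \<longleftrightarrow> p * int b < int a * d"
      unfolding rat_code_less_def enc int_encode_def sum_encode_def using d
      by simp (smt (verit) of_nat_less_iff int_nat_eq mult.assoc mult_less_cancel_left_pos
          nat_mult_distrib of_nat_mult zero_less_numeral)
    also have "\<dots> \<longleftrightarrow> q < of_nat a / of_nat b"
      unfolding q using d assms
      by (simp add: divide_less_eq less_divide_eq)
        (metis of_int_less_iff of_int_mult of_int_of_nat_eq)
    finally show ?thesis .
  next
    case False
    then have "q < 0"
      unfolding q using d by (simp add: divide_neg_pos)
    moreover have "rat_code_less a b (rat_enc q)"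
      unfolding rat_code_less_def enc int_encode_def sum_encode_def using False by simp
    ultimately show ?thesis
      by (metis of_nat_0_le_iff divide_nonneg_nonneg order.strict_trans2)
  qed
qed

lemma decidable_rat_code_less:
  assumes "total_recursive k F"
  shows "decidable k (\<lambda>xs. rat_code_less a b (F xs))"
  unfolding rat_code_less_def
  by (intro decidable_disj decidable_less total_recursive_mult total_recursive_const
      total_recursive_fst_prod_decode total_recursive_snd_prod_decode assms)
    (simp add: decidable_def total_recursive_of_bool_odd total_recursive_fst_prod_decode assms)

fun lookup_first :: "(nat \<Rightarrow> nat \<Rightarrow> bool) \<Rightarrow> (nat \<times> nat) list \<Rightarrow> nat \<Rightarrow> nat" where
  "lookup_first P [] v = 0"
| "lookup_first P ((a, b) # L) v = (if P v a then b else lookup_first P L v)"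

lemma total_recursive_lookup_first:
  assumes "decidable 2 (\<lambda>xs. P (xs ! 0) (xs ! 1))"
  shows "total_recursive 1 (\<lambda>xs. lookup_first P L (xs ! 0))"
proof (induction L)
  case Nil
  then show ?case
    by (simp add: total_recursive_zero)
next
  case (Cons ab L)
  obtain a b where ab: "ab = (a, b)"
    by fastforce
  have "decidable 1 (\<lambda>xs. P (xs ! 0) a)"
    using total_recursive_compose2[OF assms[unfolded decidable_def]
        total_recursive_proj[of 0 1] total_recursive_const[of 1 a]]
    unfolding decidable_def by simp
  from total_recursive_If[OF this total_recursive_const Cons.IH] show ?case
    by (simp add: ab)
qed

lemma lookup_first_found:
  assumes "\<exists>(a, b) \<in> set L. P v a"
  shows "\<exists>(a, b) \<in> set L. P v a \<and> lookup_first P L v = b"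
  using assms by (induction P L v rule: lookup_first.induct) auto

lemma interpretation_fun_approx:
  assumes "interpretation_fun I" and "0 < e"
  shows "\<exists>s. dist (I s) y < e"
  using assms closure_approachable[of y "range I"]
  unfolding interpretation_fun_def by (auto simp: dist_commute)

lemma interpretation_fun_of_computable: "computable_interp I \<Longrightarrow> interpretation_fun I"
  unfolding computable_interp_def by blast

lemma compact_UNIV_finite_ball_cover:
  assumes "compact (UNIV :: 'a::metric_space set)" and "0 < e"
  obtains K where "finite K" and "UNIV \<subseteq> (\<Union>y\<in>K. ball (y :: 'a) e)"
proof -
  have cover: "UNIV \<subseteq> (\<Union>y. ball (y :: 'a) e)"
    using \<open>0 < e\<close> by (auto intro!: exI[where x = y for y])
  show ?thesis
    by (rule compactE_image[OF assms(1) _ cover]) (auto intro: that)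
qed

lemma compact_interp_net:
  fixes I J :: "bool list \<Rightarrow> 'a::metric_space"
  assumes "compact (UNIV :: 'a set)" and "interpretation_fun I" and "interpretation_fun J"
    and "0 < e"
  obtains L where "\<And>s t. (s, t) \<in> set L \<Longrightarrow> dist (I s) (J t) < e"
    and "\<And>z. \<exists>(s, t) \<in> set L. dist (I s) z < e"
proof -
  have e2: "0 < e / 2"
    using \<open>0 < e\<close> by simp
  obtain K where K: "finite K" "UNIV \<subseteq> (\<Union>y\<in>K. ball (y :: 'a) (e / 2))"
    by (rule compact_UNIV_finite_ball_cover[OF assms(1) e2])
  have "\<exists>s. dist (I s) y < e / 2" "\<exists>t. dist (J t) y < e / 2" for y
    using interpretation_fun_approx[OF assms(2) e2] interpretation_fun_approx[OF assms(3) e2] .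
  then obtain sI tJ where sI: "\<And>y. dist (I (sI y)) y < e / 2"
    and tJ: "\<And>y. dist (J (tJ y)) y < e / 2"
    by metis
  obtain ys where ys: "set ys = K"
    using finite_list[OF K(1)] by blast
  show ?thesis
  proof (rule that[of "map (\<lambda>y. (sI y, tJ y)) ys"])
    fix s t
    assume "(s, t) \<in> set (map (\<lambda>y. (sI y, tJ y)) ys)"
    then obtain y where "s = sI y" "t = tJ y"
      by auto
    then show "dist (I s) (J t) < e"
      using sI[of y] tJ[of y] dist_triangle_half_l[of "I (sI y)" y e "J (tJ y)"]
      by (simp add: dist_commute)
  next
    fix z
    have "z \<in> (\<Union>y\<in>K. ball y (e / 2))"
      using K(2) by blast
    then obtain y where "y \<in> K" "dist y z < e / 2"
      by auto
    then show "\<exists>(s, t) \<in> set (map (\<lambda>y. (sI y, tJ y)) ys). dist (I s) z < e"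
      using sI[of y] ys dist_triangle_half_l[of "I (sI y)" y e z] by (auto simp: dist_commute)
  qed
qed

lemma decidable_total_rec_D_less:
  assumes "total_rec_D D"
  shows "decidable 2
    (\<lambda>xs. real_of_rat (D (bl_dec (xs ! 0)) (bl_dec (xs ! 1)) N) < 1 / real (Suc M))"
proof -
  have enc: "total_recursive 2 (\<lambda>xs. rat_enc (D (bl_dec (xs ! 0)) (bl_dec (xs ! 1)) N))"
    using total_recursive_compose3[OF total_recursive_total_rec_D[OF assms]
        total_recursive_proj[of 0 2] total_recursive_proj[of 1 2] total_recursive_const[of 2 N]]
    by simp
  have less_iff: "rat_code_less 1 (Suc M) (rat_enc q) \<longleftrightarrow> real_of_rat q < 1 / real (Suc M)" for q
  proof -
    have "real_of_rat (of_nat 1 / of_nat (Suc M)) = 1 / real (Suc M)"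
      by (simp add: of_rat_divide of_rat_add)
    then show ?thesis
      by (metis rat_code_less_rat_enc of_rat_less zero_less_Suc)
  qed
  show ?thesis
    using decidable_rat_code_less[OF enc, of 1 "Suc M"] unfolding less_iff .
qed

lemma lookup_first_net_close:
  assumes close: "\<And>s t. (s, t) \<in> set L \<Longrightarrow> dist (I s) (J t) < e"
    and net: "\<exists>(s, t) \<in> set L. dist (I s) (I u) < e"
    and complete: "\<And>s. dist (I s) (I u) < e \<Longrightarrow> P (bl_enc u) (bl_enc s)"
    and sound: "\<And>s. P (bl_enc u) (bl_enc s) \<Longrightarrow> dist (I u) (I s) < e'"
  shows "dist (J (bl_dec (lookup_first P (map (\<lambda>(s, t). (bl_enc s, bl_enc t)) L) (bl_enc u))))
    (I u) < e + e'"
proof -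
  define L' where "L' = map (\<lambda>(s, t). (bl_enc s, bl_enc t)) L"
  obtain s t where "(s, t) \<in> set L" and "dist (I s) (I u) < e"
    using net by blast
  then have "(bl_enc s, bl_enc t) \<in> set L'" and "P (bl_enc u) (bl_enc s)"
    using complete unfolding L'_def by force+
  then obtain a b where "(a, b) \<in> set L'" "P (bl_enc u) a"
    and found: "lookup_first P L' (bl_enc u) = b"
    using lookup_first_found[of L' P "bl_enc u"] by blast
  then obtain s' t' where st': "(s', t') \<in> set L" "P (bl_enc u) (bl_enc s')" and "b = bl_enc t'"
    unfolding L'_def by auto
  have "dist (J t') (I u) \<le> dist (I s') (J t') + dist (I u) (I s')"
    using dist_triangle[of "J t'" "I u" "I s'"] by (simp add: dist_commute)
  also have "\<dots> < e + e'"
    using close[OF st'(1)] sound[OF st'(2)] by simp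
  finally show ?thesis
    unfolding L'_def[symmetric] found \<open>b = bl_enc t'\<close> by simp
qed

lemma computable_approximation:
  fixes I J :: "bool list \<Rightarrow> 'a::metric_space"
  assumes "compact (UNIV :: 'a set)" and "computable_interp I" and "interpretation_fun J"
    and "0 < \<eta>"
  obtains \<sigma> where "computable_string_fun \<sigma>" and "\<And>u. dist (J (\<sigma> u)) (I u) < \<eta>"
proof -
  obtain D where D: "total_rec_D D"
    and D_approx: "\<And>s1 s2 n. \<bar>dist (I s1) (I s2) - real_of_rat (D s1 s2 n)\<bar> \<le> (1 / 2) ^ n"
    using assms(2) unfolding computable_interp_def by blast
  obtain M where M: "1 / real (Suc M) < \<eta> / 2"
    using reals_Archimedean[of "\<eta> / 2"] \<open>0 < \<eta>\<close> by (auto simp: inverse_eq_divide)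
  define \<rho> where "\<rho> = 1 / real (Suc M)"
  have \<rho>: "0 < \<rho>" "2 * \<rho> < \<eta>"
    using M unfolding \<rho>_def by simp_all
  obtain N where N: "(1 / 2) ^ N < \<rho> / 2"
    using real_arch_pow_inv[of "\<rho> / 2" "1 / 2"] \<rho>(1) by auto
  obtain L where L_close: "\<And>s t. (s, t) \<in> set L \<Longrightarrow> dist (I s) (J t) < \<rho> / 2"
    and L_net: "\<And>z. \<exists>(s, t) \<in> set L. dist (I s) z < \<rho> / 2"
    using compact_interp_net[OF assms(1) interpretation_fun_of_computable[OF assms(2)] assms(3)]
      \<rho>(1) by (metis half_gt_zero)
  define P where "P v a \<longleftrightarrow> real_of_rat (D (bl_dec v) (bl_dec a) N) < \<rho>" for v a
  define \<sigma> where "\<sigma> u = bl_dec (lookup_first P (map (\<lambda>(s, t). (bl_enc s, bl_enc t)) L) (bl_enc u))"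
    for u
  have "computable_string_fun \<sigma>"
    unfolding computable_string_fun_def \<sigma>_def
    using total_recursive_lookup_first[OF decidable_total_rec_D_less[OF D]]
    unfolding P_def \<rho>_def by simp
  moreover have "dist (J (\<sigma> u)) (I u) < \<eta>" for u
  proof -
    have "dist (J (\<sigma> u)) (I u) < \<rho> / 2 + (\<rho> + \<rho> / 2)"
      unfolding \<sigma>_def
    proof (rule lookup_first_net_close[OF L_close L_net])
      show "P (bl_enc u) (bl_enc s)" if "dist (I s) (I u) < \<rho> / 2" for s
        using that D_approx[of u s N] N unfolding P_def by (simp add: dist_commute abs_le_iff)
      show "dist (I u) (I s) < \<rho> + \<rho> / 2" if "P (bl_enc u) (bl_enc s)" for s
        using that D_approx[of u s N] N unfolding P_def by (simp add: abs_le_iff)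
    qed
    with \<rho>(2) show ?thesis
      by simp
  qed
  ultimately show ?thesis
    using that by blast
qed

section \<open>Orders of magnitude of hyperreals\<close>

locale hyperreals =
  fixes emb :: "real \<Rightarrow> 'h::linordered_field" and hJ :: "(nat \<Rightarrow> real) \<Rightarrow> 'h"
  assumes hyper: "hyper_structure emb hJ"
begin

lemma emb_add: "emb (a + b) = emb a + emb b"
  and emb_mult: "emb (a * b) = emb a * emb b"
  and emb_one: "emb 1 = 1"
  and emb_le_iff: "emb a \<le> emb b \<longleftrightarrow> a \<le> b"
  and hJ_add: "hJ (\<lambda>n. f n + g n) = hJ f + hJ g"
  and hJ_lower: "\<exists>k\<ge>1. \<forall>n\<ge>1. a \<le> \<phi> (k * n) \<Longrightarrow> emb a \<le> hJ \<phi>"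
  using hyper unfolding hyper_structure_def by blast+

lemma emb_zero: "emb 0 = 0"
  using emb_add[of 0 0] by simp

lemma hJ_diff: "hJ (\<lambda>n. f n - g n) = hJ f - hJ g"
  using hJ_add[of "\<lambda>n. f n - g n" g] by simp

lemma hJ_mono: "(\<And>n. f n \<le> g n) \<Longrightarrow> hJ f \<le> hJ g"
  using hJ_lower[of 0 "\<lambda>n. g n - f n"] by (auto simp: hJ_diff emb_zero intro: exI[of _ 1])

lemma hJ_const: "hJ (\<lambda>_. c) = emb c"
proof -
  have "hJ (\<lambda>_. 0) = 0"
    using hJ_diff[of "\<lambda>_. 0" "\<lambda>_. 0"] by simp
  moreover have "emb c \<le> hJ (\<lambda>_. c)" and "emb (- c) \<le> hJ (\<lambda>_. 0 - c)"
    by (auto intro!: hJ_lower exI[of _ 1])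
  moreover have "emb (- c) = - emb c"
    using emb_add[of c "- c"] emb_zero by (simp add: eq_neg_iff_add_eq_0)
  ultimately show ?thesis
    unfolding hJ_diff by simp
qed

definition dominated :: "'h \<Rightarrow> 'h \<Rightarrow> bool" where
  "dominated a b \<longleftrightarrow> (\<exists>r. a \<le> emb r * b)"

lemma dominated_of_le: "a \<le> b \<Longrightarrow> dominated a b"
  unfolding dominated_def using emb_one by (metis mult_1)

lemma dominated_trans:
  assumes "0 < a" and "0 < b" and "dominated a b" and "dominated b c"
  shows "dominated a c"
proof -
  obtain r s where r: "a \<le> emb r * b" and s: "b \<le> emb s * c"
    using assms(3,4) unfolding dominated_def by blast
  have "0 < emb r"
    using r assms(1,2) by (metis dual_order.strict_trans1 zero_less_mult_pos2)
  then have "a \<le> emb r * (emb s * c)"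
    using r s by (meson mult_left_mono less_imp_le order_trans)
  then show ?thesis
    unfolding dominated_def by (metis emb_mult mult.assoc)
qed

lemma dominated_hJ_add_const:
  assumes "1 \<le> hJ g" and "\<And>n. f n \<le> g n + c" and "0 \<le> c"
  shows "dominated (hJ f) (hJ g)"
proof -
  have "hJ f \<le> hJ g + emb c"
    using hJ_mono[of f "\<lambda>n. g n + c"] assms(2) by (simp add: hJ_add hJ_const)
  also have "\<dots> \<le> hJ g + emb c * hJ g"
    using assms(1,3) emb_le_iff[of 0 c] emb_zero by (simp add: mult_le_cancel_left1)
  also have "\<dots> = emb (1 + c) * hJ g"
    by (simp add: emb_add emb_one algebra_simps)
  finally show ?thesis
    unfolding dominated_def by blast
qed

lemma hsim_pos_iff:
  assumes "0 < a"
  shows "hsim emb a x \<longleftrightarrow> 0 < x \<and> dominated a x \<and> dominated x a"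
proof (cases "0 < x")
  case True
  with assms show ?thesis
    unfolding hsim_def dominated_def by (simp add: divide_le_eq)
next
  case False
  with assms show ?thesis
    unfolding hsim_def by (auto simp: zero_less_divide_iff)
qed

lemma hsim_same_sign: "hsim emb a x \<Longrightarrow> 0 < a \<longleftrightarrow> 0 < x"
  unfolding hsim_def by (auto simp: zero_less_divide_iff)

lemma mem_hclass_self: "a \<noteq> 0 \<Longrightarrow> a \<in> hclass emb a"
  unfolding hclass_def hsim_def using emb_one by (auto intro!: exI[of _ 1])

lemma cls_le_hclass_iff:
  assumes "0 < a" and "0 < b"
  shows "cls_le emb (hclass emb a) (hclass emb b) \<longleftrightarrow> dominated a b"
proof
  assume "cls_le emb (hclass emb a) (hclass emb b)"
  then have "hsim emb a b \<or> a < b"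
    using mem_hclass_self assms unfolding cls_le_def by (metis less_irrefl)
  then show "dominated a b"
    using hsim_pos_iff[OF assms(1)] dominated_of_le by auto
next
  assume ab: "dominated a b"
  show "cls_le emb (hclass emb a) (hclass emb b)"
    unfolding cls_le_def
  proof (intro ballI)
    fix x y
    assume "x \<in> hclass emb a" and "y \<in> hclass emb b"
    then have x: "0 < x" "dominated x a" and y: "0 < y" "dominated b y"
      using hsim_pos_iff assms unfolding hclass_def by blast+
    have "dominated x y"
      using dominated_trans[OF x(1) assms(1) x(2) dominated_trans[OF assms ab y(2)]] .
    moreover have "dominated y x" if "y \<le> x"
      using dominated_of_le[OF that] .
    ultimately show "hsim emb x y \<or> x < y"
      using hsim_pos_iff[OF x(1)] y(1) by (meson not_less)
  qed
qed

lemma hclass_eq_iff: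
  assumes "0 < a" and "0 < b"
  shows "hclass emb a = hclass emb b \<longleftrightarrow> dominated a b \<and> dominated b a"
proof
  assume "hclass emb a = hclass emb b"
  then have "hsim emb b a"
    using mem_hclass_self[of a] assms unfolding hclass_def by auto
  then show "dominated a b \<and> dominated b a"
    using hsim_pos_iff[OF assms(2)] by blast
next
  assume "dominated a b \<and> dominated b a"
  then show "hclass emb a = hclass emb b"
    unfolding hclass_def hsim_pos_iff[OF assms(1)] hsim_pos_iff[OF assms(2)]
    using dominated_trans assms by blast
qed

lemma cls_less_hclass_iff:
  assumes "0 < a" and "0 < b"
  shows "cls_less emb (hclass emb a) (hclass emb b) \<longleftrightarrow> \<not> dominated b a"
  using assms cls_le_hclass_iff hclass_eq_iff dominated_of_le
  unfolding cls_less_def by (meson linear)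

lemma cls_less_hclass_neg_pos:
  assumes "b < 0" and "0 < c"
  shows "cls_less emb (hclass emb b) (hclass emb c)"
proof -
  have "x < 0" if "x \<in> hclass emb b" for x
    using that hsim_same_sign[of b x] assms(1) unfolding hclass_def hsim_def by force
  moreover have "0 < y" if "y \<in> hclass emb c" for y
    using that hsim_same_sign[of c y] assms(2) unfolding hclass_def by blast
  ultimately show ?thesis
    unfolding cls_less_def cls_le_def
    using mem_hclass_self[of c] assms(2) by (metis less_irrefl order.strict_trans)
qed

lemma pos_of_cls_le_hclass:
  assumes "0 < a" and "b \<noteq> 0" and "cls_le emb (hclass emb a) (hclass emb b)"
  shows "0 < b"
  using assms mem_hclass_self[of a] mem_hclass_self[of b] hsim_same_sign
  unfolding cls_le_def by (metis less_irrefl order.strict_trans)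

lemma cls_less_hclass_dominated_left:
  assumes "0 < a" and "0 < a'" and "dominated a' a" and "\<beta> \<noteq> 0"
    and "cls_less emb (hclass emb a) (hclass emb \<beta>)"
  shows "cls_less emb (hclass emb a') (hclass emb \<beta>)"
proof -
  have \<beta>: "0 < \<beta>"
    using pos_of_cls_le_hclass assms(1,4,5) unfolding cls_less_def by blast
  have "\<not> dominated \<beta> a"
    using assms(5) cls_less_hclass_iff[OF assms(1) \<beta>] by simp
  then have "\<not> dominated \<beta> a'"
    using dominated_trans[OF \<beta> assms(2) _ assms(3)] by blast
  then show ?thesis
    using cls_less_hclass_iff[OF assms(2) \<beta>] by simp
qed

lemma cls_less_hclass_dominated_right:
  assumes "0 < a" and "0 < a'" and "dominated a a'" and "\<beta> \<noteq> 0"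
    and "cls_less emb (hclass emb \<beta>) (hclass emb a)"
  shows "cls_less emb (hclass emb \<beta>) (hclass emb a')"
proof (cases "\<beta> < 0")
  case True
  then show ?thesis
    using cls_less_hclass_neg_pos assms(2) by blast
next
  case False
  then have \<beta>: "0 < \<beta>"
    using assms(4) by simp
  have "\<not> dominated a \<beta>"
    using assms(5) cls_less_hclass_iff[OF \<beta> assms(1)] by simp
  then have "\<not> dominated a' \<beta>"
    using dominated_trans[OF assms(1,2,3)] by blast
  then show ?thesis
    using cls_less_hclass_iff[OF \<beta> assms(2)] by simp
qed

lemma mono_cls_seq_hclass:
  assumes "mono_cls_seq emb B"
  obtains \<beta> where "\<And>m. \<beta> m \<noteq> 0" and "\<And>m. B m = hclass emb (\<beta> m)"
proof -
  have "\<forall>m. \<exists>\<beta>. \<beta> \<noteq> 0 \<and> B m = hclass emb \<beta>"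
    using assms unfolding mono_cls_seq_def hclasses_def by blast
  then show ?thesis
    using that by metis
qed

lemma seq_less_transfer_left:
  assumes pos: "\<And>m. 0 < a m" "\<And>m. 0 < b m"
    and mono: "\<And>m m'. m \<le> m' \<Longrightarrow> dominated (a m) (a m')"
    and cofinal: "\<And>m. \<exists>m'. dominated (b m) (a m')"
    and B: "mono_cls_seq emb B" and less: "seq_less emb (\<lambda>m. hclass emb (a m)) B"
  shows "seq_less emb (\<lambda>m. hclass emb (b m)) B"
proof -
  obtain \<beta> where \<beta>: "\<And>m. \<beta> m \<noteq> 0" "\<And>m. B m = hclass emb (\<beta> m)"
    using mono_cls_seq_hclass[OF B] by blast
  obtain M where M: "\<And>n m. M < n \<Longrightarrow> M < m \<Longrightarrow> cls_less emb (hclass emb (a n)) (B m)"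
    using less unfolding seq_less_def by blast
  have "cls_less emb (hclass emb (b n)) (B m)" if "M < m" for n m
  proof -
    obtain n' where "dominated (b n) (a n')"
      using cofinal by blast
    then have "dominated (b n) (a (max n' (Suc M)))"
      using dominated_trans[OF pos(2) pos(1) _ mono[OF max.cobounded1]] by blast
    then show ?thesis
      using cls_less_hclass_dominated_left[OF pos(1) pos(2) _ \<beta>(1)] M[of "max n' (Suc M)" m]
        \<open>M < m\<close> \<beta>(2) by simp
  qed
  then show ?thesis
    unfolding seq_less_def by blast
qed

lemma seq_less_transfer_right:
  assumes pos: "\<And>m. 0 < a m" "\<And>m. 0 < b m"
    and mono: "\<And>m m'. m \<le> m' \<Longrightarrow> dominated (b m) (b m')"
    and cofinal: "\<And>m. \<exists>m'. dominated (a m) (b m')"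
    and B: "mono_cls_seq emb B" and less: "seq_less emb B (\<lambda>m. hclass emb (a m))"
  shows "seq_less emb B (\<lambda>m. hclass emb (b m))"
proof -
  obtain \<beta> where \<beta>: "\<And>m. \<beta> m \<noteq> 0" "\<And>m. B m = hclass emb (\<beta> m)"
    using mono_cls_seq_hclass[OF B] by blast
  obtain M where M: "\<And>n m. M < n \<Longrightarrow> M < m \<Longrightarrow> cls_less emb (B n) (hclass emb (a m))"
    using less unfolding seq_less_def by blast
  obtain m0 where m0: "dominated (a (Suc M)) (b m0)"
    using cofinal by blast
  have "cls_less emb (B n) (hclass emb (b m))" if "max M m0 < n" "max M m0 < m" for n m
  proof -
    have "dominated (a (Suc M)) (b m)"
      using dominated_trans[OF pos(1) pos(2) m0 mono] that by simp
    then show ?thesis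
      using cls_less_hclass_dominated_right[OF pos(1) pos(2) _ \<beta>(1)] M[of n "Suc M"] that \<beta>(2)
      by simp
  qed
  then show ?thesis
    unfolding seq_less_def by blast
qed

lemma Rclass_eq_if_cofinal:
  assumes pos: "\<And>m. 0 < a m" "\<And>m. 0 < b m"
    and mono: "\<And>m m'. m \<le> m' \<Longrightarrow> dominated (a m) (a m')"
      "\<And>m m'. m \<le> m' \<Longrightarrow> dominated (b m) (b m')"
    and cofinal: "\<And>m. \<exists>m'. dominated (a m) (b m')" "\<And>m. \<exists>m'. dominated (b m) (a m')"
  shows "Rclass emb (\<lambda>m. hclass emb (a m)) = Rclass emb (\<lambda>m. hclass emb (b m))"
proof -
  have "seq_approx emb (\<lambda>m. hclass emb (a m)) B \<longleftrightarrow> seq_approx emb (\<lambda>m. hclass emb (b m)) B"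
    if "mono_cls_seq emb B" for B
    using seq_less_transfer_left[where a = a and b = b, OF pos mono(1) cofinal(2) that]
      seq_less_transfer_right[where a = a and b = b, OF pos mono(2) cofinal(1) that]
      seq_less_transfer_left[where a = b and b = a, OF pos(2,1) mono(2) cofinal(1) that]
      seq_less_transfer_right[where a = b and b = a, OF pos(2,1) mono(1) cofinal(2) that]
    unfolding seq_approx_def by blast
  then show ?thesis
    unfolding Rclass_def by blast
qed

end

section \<open>Orbit complexity\<close>

locale orbit_coding =
  fixes U :: "bool list \<Rightarrow> bool list option" and Q :: "bool list \<Rightarrow> bool list list"
  assumes universal: "universal_machine U" and decoder: "seq_decoder Q"
begin

definition shadows ::
  "('a::metric_space \<Rightarrow> 'a) \<Rightarrow> (bool list \<Rightarrow> 'a) \<Rightarrow> 'a \<Rightarrow> nat \<Rightarrow> real \<Rightarrow> bool list \<Rightarrow> bool"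
  where "shadows T I x n \<epsilon> p \<longleftrightarrow>
    (\<exists>s. U p = Some s \<and> length (Q s) = Suc n \<and> (\<forall>i\<le>n. dist (I (Q s ! i)) ((T ^^ i) x) < \<epsilon>))"

lemma orbit_compl_eq_Inf: "orbit_compl U Q T I x n \<epsilon> = Inf (length ` {p. shadows T I x n \<epsilon> p})"
  unfolding orbit_compl_def shadows_def by (simp only: setcompr_eq_image mem_Collect_eq)

lemma orbit_compl_le: "shadows T I x n \<epsilon> p \<Longrightarrow> orbit_compl U Q T I x n \<epsilon> \<le> length p"
  unfolding orbit_compl_eq_Inf by (simp add: cInf_lower)

lemma ex_shadows:
  assumes "interpretation_fun I" and "0 < \<epsilon>"
  shows "\<exists>p. shadows T I x n \<epsilon> p"
proof -
  have "\<forall>i. \<exists>s. dist (I s) ((T ^^ i) x) < \<epsilon>"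
    using interpretation_fun_approx[OF assms] by blast
  then obtain w where w: "\<And>i. dist (I (w i)) ((T ^^ i) x) < \<epsilon>"
    by metis
  obtain s where s: "Q s = map w [0..<Suc n]"
    using decoder unfolding seq_decoder_def by (metis surjD)
  obtain p where "U p = Some s"
    using universal_machine_outputs_all[OF universal] by blast
  with s w have "shadows T I x n \<epsilon> p"
    unfolding shadows_def by (auto simp del: upt_Suc)
  then show ?thesis ..
qed

lemma orbit_compl_attained:
  assumes "interpretation_fun I" and "0 < \<epsilon>"
  obtains p where "shadows T I x n \<epsilon> p" and "length p = orbit_compl U Q T I x n \<epsilon>"
proof -
  have "orbit_compl U Q T I x n \<epsilon> \<in> length ` {p. shadows T I x n \<epsilon> p}"
    unfolding orbit_compl_eq_Inf using ex_shadows[OF assms] by (intro Inf_nat_def1) auto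
  then show ?thesis
    using that by auto
qed

lemma orbit_compl_antimono:
  assumes "interpretation_fun I" and "0 < \<epsilon>" and "\<epsilon> \<le> \<epsilon>'"
  shows "orbit_compl U Q T I x n \<epsilon>' \<le> orbit_compl U Q T I x n \<epsilon>"
proof -
  obtain p where "shadows T I x n \<epsilon> p" and "length p = orbit_compl U Q T I x n \<epsilon>"
    using orbit_compl_attained[OF assms(1,2)] .
  then show ?thesis
    using assms(3) orbit_compl_le[of T I x n \<epsilon>' p] unfolding shadows_def by fastforce
qed

lemma orbit_compl_pos:
  assumes "interpretation_fun I" and "0 < \<epsilon>" and "\<And>s. U [] = Some s \<Longrightarrow> length (Q s) \<noteq> Suc n"
  shows "0 < orbit_compl U Q T I x n \<epsilon>"
proof (rule ccontr)
  assume "\<not> 0 < orbit_compl U Q T I x n \<epsilon>"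
  then have "shadows T I x n \<epsilon> []"
    using orbit_compl_attained[OF assms(1,2)] by (metis length_0_conv neq0_conv)
  then show False
    using assms(3) unfolding shadows_def by blast
qed

lemma orbit_compl_change_interp:
  fixes I J :: "bool list \<Rightarrow> 'a::metric_space"
  assumes "compact (UNIV :: 'a set)" and "computable_interp I" and "interpretation_fun J"
    and "0 < \<eta>"
  obtains c where "\<And>n \<epsilon>. 0 < \<epsilon> \<Longrightarrow> orbit_compl U Q T J x n (\<epsilon> + \<eta>) \<le> c + orbit_compl U Q T I x n \<epsilon>"
proof -
  obtain \<sigma> where \<sigma>: "computable_string_fun \<sigma>" and close: "\<And>u. dist (J (\<sigma> u)) (I u) < \<eta>"
    using computable_approximation[OF assms] by blast
  obtain c where c: "\<And>p s. U p = Some s \<Longrightarrow> \<exists>s'. U (c @ p) = Some s' \<and> Q s' = map \<sigma> (Q s)"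
    using universal_machine_map_translator[OF universal decoder \<sigma>] by blast
  have "orbit_compl U Q T J x n (\<epsilon> + \<eta>) \<le> length c + orbit_compl U Q T I x n \<epsilon>"
    if \<epsilon>: "0 < \<epsilon>" for n \<epsilon>
  proof -
    obtain p where "shadows T I x n \<epsilon> p" and p: "length p = orbit_compl U Q T I x n \<epsilon>"
      using orbit_compl_attained[OF interpretation_fun_of_computable[OF assms(2)] \<epsilon>] .
    then obtain s where s: "U p = Some s" "length (Q s) = Suc n"
      and shadow: "\<And>i. i \<le> n \<Longrightarrow> dist (I (Q s ! i)) ((T ^^ i) x) < \<epsilon>"
      unfolding shadows_def by blast
    obtain s' where s': "U (c @ p) = Some s'" "Q s' = map \<sigma> (Q s)"
      using c[OF s(1)] by blast
    have "dist (J (Q s' ! i)) ((T ^^ i) x) < \<epsilon> + \<eta>" if "i \<le> n" for i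
      using s s' that close[of "Q s ! i"] shadow[OF that]
        dist_triangle[of "J (\<sigma> (Q s ! i))" "(T ^^ i) x" "I (Q s ! i)"]
      by simp
    with s s' have "shadows T J x n (\<epsilon> + \<eta>) (c @ p)"
      unfolding shadows_def by auto
    from orbit_compl_le[OF this] p show ?thesis
      by simp
  qed
  then show ?thesis
    using that by blast
qed

end

locale orbit_complexity = hyperreals emb hJ + orbit_coding U Q
  for emb :: "real \<Rightarrow> 'h::linordered_field" and hJ and U and Q
begin

text \<open>The empty program shadows orbit segments of at most one length \<open>l\<close>, so along the
  multiples of \<open>l + 1\<close> the complexity is positive.\<close>

lemma one_le_hJ_orbit_compl:
  assumes "interpretation_fun I" and "0 < \<epsilon>"
  shows "1 \<le> hJ (\<lambda>n. real (orbit_compl U Q T I x n \<epsilon>))"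
proof -
  define l where "l = (case U [] of None \<Rightarrow> 0 | Some s \<Rightarrow> length (Q s))"
  have "1 \<le> real (orbit_compl U Q T I x (Suc l * n) \<epsilon>)" if "1 \<le> n" for n
  proof -
    have "Suc l \<le> Suc l * n"
      using mult_le_mono2[OF that, of "Suc l"] by simp
    then have "0 < orbit_compl U Q T I x (Suc l * n) \<epsilon>"
      by (intro orbit_compl_pos[OF assms]) (auto simp: l_def)
    then show ?thesis
      by simp
  qed
  then have "emb 1 \<le> hJ (\<lambda>n. real (orbit_compl U Q T I x n \<epsilon>))"
    by (intro hJ_lower exI[of _ "Suc l"]) simp
  then show ?thesis
    by (simp add: emb_one)
qed

lemma dominated_hJ_orbit_compl_change_interp:
  fixes I J :: "bool list \<Rightarrow> 'a::metric_space"
  assumes "compact (UNIV :: 'a set)" and "computable_interp I" and "interpretation_fun J"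
    and "0 < \<epsilon>" and "0 < \<eta>"
  shows "dominated (hJ (\<lambda>n. real (orbit_compl U Q T J x n (\<epsilon> + \<eta>))))
    (hJ (\<lambda>n. real (orbit_compl U Q T I x n \<epsilon>)))"
proof -
  obtain c where c: "\<And>n. orbit_compl U Q T J x n (\<epsilon> + \<eta>) \<le> c + orbit_compl U Q T I x n \<epsilon>"
    using orbit_compl_change_interp[OF assms(1-3,5)] \<open>0 < \<epsilon>\<close> by metis
  have "real (orbit_compl U Q T J x n (\<epsilon> + \<eta>)) \<le> real (orbit_compl U Q T I x n \<epsilon>) + real c" for n
    using c[of n] by (metis add.commute of_nat_add of_nat_le_iff)
  then show ?thesis
    using one_le_hJ_orbit_compl[OF interpretation_fun_of_computable[OF assms(2)] assms(4)]
    by (intro dominated_hJ_add_const[where c = "real c"]) simp_all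
qed

lemma E_orbit_eq:
  fixes I J :: "bool list \<Rightarrow> 'a::metric_space"
  assumes "compact (UNIV :: 'a set)" and "computable_interp I" and "computable_interp J"
  shows "E_orbit emb hJ U Q T I x = E_orbit emb hJ U Q T J x"
proof -
  define a where "a K m = hJ (\<lambda>n. real (orbit_compl U Q T K x n (1 / real (Suc m))))" for K m
  have pos: "0 < a K m" if "computable_interp K" for K m
    using one_le_hJ_orbit_compl[OF interpretation_fun_of_computable[OF that]] unfolding a_def
    by (meson of_nat_0_less_iff zero_less_Suc divide_pos_pos zero_less_one less_le_trans)
  have mono: "dominated (a K m) (a K m')" if "computable_interp K" and "m \<le> m'" for K m m'
    unfolding a_def using interpretation_fun_of_computable[OF that(1)] that(2)
    by (intro dominated_of_le hJ_mono) (simp add: orbit_compl_antimono frac_le)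
  have cofinal: "dominated (a K m) (a K' (2 * m + 1))"
    if "computable_interp K" and "computable_interp K'" for K K' m
  proof -
    have "1 / real (Suc (2 * m + 1)) + 1 / real (Suc (2 * m + 1)) = 1 / real (Suc m)"
      by (simp add: field_simps)
    then show ?thesis
      using dominated_hJ_orbit_compl_change_interp[OF assms(1) that(2)
          interpretation_fun_of_computable[OF that(1)],
          of "1 / real (Suc (2 * m + 1))" "1 / real (Suc (2 * m + 1))"]
      unfolding a_def by simp
  qed
  have "Rclass emb (\<lambda>m. hclass emb (a I m)) = Rclass emb (\<lambda>m. hclass emb (a J m))"
    using assms(2,3) by (intro Rclass_eq_if_cofinal pos mono) (auto intro: cofinal)
  then show ?thesis
    unfolding E_orbit_def E_eps_def a_def .
qed

end

theorem mainTheorem7: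
  fixes T :: "'a::metric_space \<Rightarrow> 'a"
    and I J :: "bool list \<Rightarrow> 'a"
    and U :: "bool list \<Rightarrow> bool list option"
    and Q :: "bool list \<Rightarrow> bool list list"
    and emb :: "real \<Rightarrow> 'h::linordered_field"
    and hJ :: "(nat \<Rightarrow> real) \<Rightarrow> 'h"
  assumes "compact (UNIV :: 'a set)"
    and "universal_machine U"
    and "seq_decoder Q"
    and "hyper_structure emb hJ"
    and "computable_interp I"
    and "computable_interp J"
  shows "\<forall>x. E_orbit emb hJ U Q T I x = E_orbit emb hJ U Q T J x"
proof -
  interpret orbit_complexity emb hJ U Q
    by unfold_locales (fact assms)+
  show ?thesis
    using E_orbit_eq[OF assms(1,5,6)] by blast
qed

end
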